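(* Let $R$ be a commutative Noetherian ring with $\dim R=2$ having only finitely many prime ideals of height two. Then $\operatorname{Spec} R$, ordered by inclusion, is a $K$-poset.
   Context: For a poset $U$: $\dim U$ is the supremum of lengths of chains; $L(u)=\{v\le u\}$, $G(u)=\{v\ge u\}$, $L(u)^*=L(u)\setminus\{u\}$, $G(u)^*=G(u)\setminus\{u\}$; height of $u$ is $\dim L(u)$; $H_i$ is the set of nodes of height $i$. For nonempty $A\subseteq U$, $\operatorname{mub}A$ is the set of minimal elements among the common upper bounds of $A$. $[b/c]$ denotes the set of $u$ with $G(u)^*=\{b\}$ and $L(u)^*=\{c\}$. A poset $U$ with $\dim U\le 2$ is a $K$-poset if: (1) $\min U$ and $H_2$ are finite; (2) for distinct $u,v\in\min U$, $\operatorname{mub}\{u,v\}$ is finite; (3) whenever $u>v>w$ for some $v$, $[u/w]$ is infinite. *)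

theory Defs
  imports "HOL-Algebra.Ring_Divisibility" "HOL-Library.Extended_Nat"
begin

text \<open>Posets are given by a carrier set U and an order relation r (assumed to be a
partial order on U). Strict order: r u v and u \<noteq> v.\<close>

definition fin_chains :: "'a set \<Rightarrow> ('a \<Rightarrow> 'a \<Rightarrow> bool) \<Rightarrow> 'a set set" where
  "fin_chains U r = {C. C \<subseteq> U \<and> C \<noteq> {} \<and> finite C \<and> (\<forall>x\<in>C. \<forall>y\<in>C. r x y \<or> r y x)}"

definition pdim :: "'a set \<Rightarrow> ('a \<Rightarrow> 'a \<Rightarrow> bool) \<Rightarrow> enat" where
  "pdim U r = Sup ((\<lambda>C. enat (card C - 1)) ` fin_chains U r)"

definition downset :: "'a set \<Rightarrow> ('a \<Rightarrow> 'a \<Rightarrow> bool) \<Rightarrow> 'a \<Rightarrow> 'a set" where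
  "downset U r u = {v\<in>U. r v u}"

definition upset :: "'a set \<Rightarrow> ('a \<Rightarrow> 'a \<Rightarrow> bool) \<Rightarrow> 'a \<Rightarrow> 'a set" where
  "upset U r u = {v\<in>U. r u v}"

definition pheight :: "'a set \<Rightarrow> ('a \<Rightarrow> 'a \<Rightarrow> bool) \<Rightarrow> 'a \<Rightarrow> enat" where
  "pheight U r u = pdim (downset U r u) r"

definition Hlevel :: "'a set \<Rightarrow> ('a \<Rightarrow> 'a \<Rightarrow> bool) \<Rightarrow> nat \<Rightarrow> 'a set" where
  "Hlevel U r i = {u\<in>U. pheight U r u = enat i}"

definition minset :: "'a set \<Rightarrow> ('a \<Rightarrow> 'a \<Rightarrow> bool) \<Rightarrow> 'a set" where
  "minset U r = {u\<in>U. \<forall>v\<in>U. r v u \<longrightarrow> v = u}"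

definition mub :: "'a set \<Rightarrow> ('a \<Rightarrow> 'a \<Rightarrow> bool) \<Rightarrow> 'a set \<Rightarrow> 'a set" where
  "mub U r A = minset {w\<in>U. \<forall>a\<in>A. r a w} r"

text \<open>[b/c]: nodes u with G(u)* = {b} and L(u)* = {c}.\<close>
definition between :: "'a set \<Rightarrow> ('a \<Rightarrow> 'a \<Rightarrow> bool) \<Rightarrow> 'a \<Rightarrow> 'a \<Rightarrow> 'a set" where
  "between U r b c = {u\<in>U. upset U r u - {u} = {b} \<and> downset U r u - {u} = {c}}"

definition K_poset :: "'a set \<Rightarrow> ('a \<Rightarrow> 'a \<Rightarrow> bool) \<Rightarrow> bool" where
  "K_poset U r \<longleftrightarrow>
     pdim U r \<le> 2 \<and>
     finite (minset U r) \<and> finite (Hlevel U r 2) \<and>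
     (\<forall>u\<in>minset U r. \<forall>v\<in>minset U r. u \<noteq> v \<longrightarrow> finite (mub U r {u, v})) \<and>
     (\<forall>u\<in>U. \<forall>w\<in>U. (\<exists>v\<in>U. r v u \<and> v \<noteq> u \<and> r w v \<and> w \<noteq> v)
        \<longrightarrow> infinite (between U r u w))"

definition Spec :: "('a, 'b) ring_scheme \<Rightarrow> 'a set set" where
  "Spec R = {P. primeideal P R}"

definition krull_dim :: "('a, 'b) ring_scheme \<Rightarrow> enat" where
  "krull_dim R = pdim (Spec R) (\<subseteq>)"

end

theory Submission
  imports Defs "HOL-Algebra.Ideal_Product"
begin

text \<open>Since \<open>R\<close> is Noetherian, \<open>Spec R\<close> has finitely many minimal primes, and two primes
  have finitely many minimal upper bounds, namely among the minimal primes over their sum; the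
  height-two primes are finite by hypothesis. For the last condition let \<open>w \<subset> v \<subset> u\<close>
  be primes, so \<open>u\<close> is maximal and \<open>w\<close> minimal in \<open>Spec R\<close>. If \<open>[u/w]\<close> were finite,
  prime avoidance would give \<open>x \<in> u\<close> lying outside \<open>w\<close>, outside \<open>[u/w]\<close>, outside
  the other primes of height two and outside the minimal upper bounds other than \<open>u\<close> of \<open>w\<close>
  and another minimal prime. Krull's principal ideal theorem in \<open>R/w\<close> yields a prime
  \<open>Q \<subset> u\<close> containing \<open>w\<close> and \<open>x\<close>, and the choice of \<open>x\<close> forces \<open>Q \<in> [u/w]\<close>,
  a contradiction.

  The principal ideal theorem is proved from scratch, with localizations encoded by saturations:
  for primes \<open>w \<subset> p \<subset> u\<close> with \<open>u\<close> minimal over \<open>w + (x)\<close>, the ring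
  \<open>R\<^sub>u/(w + (x))\<close> is Artinian, so the saturated powers of \<open>p\<close> modulo \<open>w\<close> stabilize, and
  Nakayama's lemma then forces \<open>p\<^sup>n \<subseteq> w\<close>.\<close>

context ring
begin

lemma ideal_add_closed: "ideal I R \<Longrightarrow> a \<in> I \<Longrightarrow> b \<in> I \<Longrightarrow> a \<oplus> b \<in> I"
  by (rule additive_subgroup.a_closed[OF ideal.axioms(1)])

lemma ideal_zero_closed: "ideal I R \<Longrightarrow> \<zero> \<in> I"
  by (rule additive_subgroup.zero_closed[OF ideal.axioms(1)])

lemma ideal_diff_closed:
  assumes "ideal I R" "a \<in> I" "b \<in> I" shows "a \<ominus> b \<in> I"
  unfolding a_minus_def
  by (rule ideal_add_closed[OF assms(1,2)
        additive_subgroup.a_inv_closed[OF ideal.axioms(1)[OF assms(1)] assms(3)]])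

lemma ideal_subset_carrier: "ideal I R \<Longrightarrow> I \<subseteq> carrier R"
  by (rule additive_subgroup.a_subset[OF ideal.axioms(1)])

lemma ideal_add_notin:
  assumes Q: "ideal Q R" and "b \<in> carrier R" "c \<in> carrier R" "b \<in> Q" "c \<notin> Q"
  shows "b \<oplus> c \<notin> Q"
proof
  assume "b \<oplus> c \<in> Q"
  moreover have "c = (b \<oplus> c) \<ominus> b" using assms(2,3) by algebra
  ultimately show False using ideal_diff_closed[OF Q _ assms(4)] assms(5) by metis
qed

lemma set_add_iff: "a \<in> I <+>\<^bsub>R\<^esub> J \<longleftrightarrow> (\<exists>i\<in>I. \<exists>j\<in>J. a = i \<oplus> j)"
  unfolding set_add_def' by auto

lemma set_add_mono: "I \<subseteq> I' \<Longrightarrow> J \<subseteq> J' \<Longrightarrow> I <+>\<^bsub>R\<^esub> J \<subseteq> I' <+>\<^bsub>R\<^esub> J'"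
  unfolding set_add_def' by auto

lemma ideal_sum_upper1: "ideal I R \<Longrightarrow> ideal J R \<Longrightarrow> I \<subseteq> I <+>\<^bsub>R\<^esub> J"
proof
  fix a assume "ideal I R" "ideal J R" "a \<in> I"
  then show "a \<in> I <+>\<^bsub>R\<^esub> J"
    unfolding set_add_iff using ideal.Icarr ideal_zero_closed r_zero by metis
qed

lemma ideal_sum_upper2: "ideal I R \<Longrightarrow> ideal J R \<Longrightarrow> J \<subseteq> I <+>\<^bsub>R\<^esub> J"
proof
  fix a assume "ideal I R" "ideal J R" "a \<in> J"
  then show "a \<in> I <+>\<^bsub>R\<^esub> J"
    unfolding set_add_iff using ideal.Icarr ideal_zero_closed l_zero by metis
qed

lemma ideal_sum_least: "ideal K R \<Longrightarrow> I \<subseteq> K \<Longrightarrow> J \<subseteq> K \<Longrightarrow> I <+>\<^bsub>R\<^esub> J \<subseteq> K"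
  unfolding set_add_def' using ideal_add_closed by blast

lemma ideal_prod_mono2:
  assumes "J \<subseteq> J'" shows "I \<cdot> J \<subseteq> I \<cdot> J'"
proof
  fix z assume "z \<in> I \<cdot> J"
  then show "z \<in> I \<cdot> J'"
    by induct (use assms in \<open>auto intro: ideal_prod.intros\<close>)
qed

end

context cring
begin

lemma ideal_prod_PIdl:
  assumes I: "ideal I R" and m: "m \<in> carrier R" and z: "z \<in> I \<cdot> (PIdl m)"
  shows "\<exists>q\<in>I. z = q \<otimes> m"
  using z
proof induct
  case (prod i j)
  then obtain c where c: "c \<in> carrier R" "j = c \<otimes> m" unfolding cgenideal_def by auto
  then have "i \<otimes> j = (i \<otimes> c) \<otimes> m"
    using prod(1) ideal.Icarr[OF I] m by (simp add: m_assoc)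
  then show ?case using ideal.I_r_closed[OF I prod(1) c(1)] by blast
next
  case (sum s1 s2)
  then obtain q1 q2 where "q1 \<in> I" "q2 \<in> I" "s1 = q1 \<otimes> m" "s2 = q2 \<otimes> m" by blast
  moreover from this have "s1 \<oplus> s2 = (q1 \<oplus> q2) \<otimes> m"
    using ideal.Icarr[OF I] m by (simp add: l_distr)
  ultimately show ?case using ideal_add_closed[OF I] by blast
qed

lemma Idl_insert:
  assumes S: "S \<subseteq> carrier R" and m: "m \<in> carrier R"
  shows "Idl (insert m S) = Idl S <+>\<^bsub>R\<^esub> PIdl m"
proof
  have I: "ideal (Idl S) R" "ideal (PIdl m) R" using genideal_ideal[OF S] cgenideal_ideal[OF m] .
  have "insert m S \<subseteq> Idl S <+>\<^bsub>R\<^esub> PIdl m"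
    using ideal_sum_upper1[OF I] ideal_sum_upper2[OF I] genideal_self[OF S] cgenideal_self[OF m]
    by blast
  then show "Idl (insert m S) \<subseteq> Idl S <+>\<^bsub>R\<^esub> PIdl m"
    by (rule genideal_minimal[OF add_ideals[OF I]])
  have S': "insert m S \<subseteq> carrier R" using S m by blast
  have "Idl S \<subseteq> Idl (insert m S)" using subset_Idl_subset[OF S'] by blast
  moreover have "PIdl m \<subseteq> Idl (insert m S)"
    using cgenideal_minimal[OF genideal_ideal[OF S']] genideal_self[OF S'] by blast
  ultimately show "Idl S <+>\<^bsub>R\<^esub> PIdl m \<subseteq> Idl (insert m S)"
    by (rule ideal_sum_least[OF genideal_ideal[OF S']])
qed

lemma primeideal_one_notin: "primeideal P R \<Longrightarrow> \<one> \<notin> P"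
  using ideal.one_imp_carrier primeideal.axioms(1) primeideal.I_notcarr by metis

lemma primeideal_compl_mult:
  assumes "primeideal P R" "s \<in> carrier R - P" "t \<in> carrier R - P"
  shows "s \<otimes> t \<in> carrier R - P"
  using assms primeideal.I_prime[OF assms(1), of s t] by auto

lemma primeideal_pow_mem:
  assumes P: "primeideal P R" and a: "a \<in> carrier R" and "a [^] (n::nat) \<in> P"
  shows "a \<in> P"
  using assms(3)
proof (induction n)
  case 0
  then show ?case using primeideal_one_notin[OF P] by simp
next
  case (Suc n)
  then show ?case using primeideal.I_prime[OF P, of "a [^] n" a] a by auto
qed

text \<open>\<open>saturation P X\<close> is the contraction to \<open>R\<close> of the extension of \<open>X\<close> to the
  localization \<open>R\<^sub>P\<close>.\<close>

definition saturation :: "'a set \<Rightarrow> 'a set \<Rightarrow> 'a set" where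
  "saturation P X = {a \<in> carrier R. \<exists>s\<in>carrier R - P. s \<otimes> a \<in> X}"

lemma saturationI: "a \<in> carrier R \<Longrightarrow> s \<in> carrier R - P \<Longrightarrow> s \<otimes> a \<in> X \<Longrightarrow> a \<in> saturation P X"
  unfolding saturation_def by blast

lemma saturationE:
  assumes "a \<in> saturation P X"
  obtains s where "a \<in> carrier R" "s \<in> carrier R - P" "s \<otimes> a \<in> X"
  using assms unfolding saturation_def by blast

lemma saturation_mono: "X \<subseteq> Y \<Longrightarrow> saturation P X \<subseteq> saturation P Y"
  unfolding saturation_def by blast

lemma saturation_antimono:
  assumes "P \<subseteq> Q" shows "saturation Q X \<subseteq> saturation P X"
  unfolding saturation_def using assms by blast

lemma subset_saturation:
  assumes "primeideal P R" "X \<subseteq> carrier R" shows "X \<subseteq> saturation P X"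
proof
  fix a assume "a \<in> X"
  then show "a \<in> saturation P X"
    using assms primeideal_one_notin by (intro saturationI[of a \<one>]) auto
qed

lemma saturation_ideal:
  assumes P: "primeideal P R" and X: "ideal X R"
  shows "ideal (saturation P X) R"
proof (rule idealI)
  show "ring R" by (rule ring_axioms)
  show "subgroup (saturation P X) (add_monoid R)"
  proof (rule subgroup.intro)
    show "saturation P X \<subseteq> carrier (add_monoid R)" unfolding saturation_def by auto
    show "\<one>\<^bsub>add_monoid R\<^esub> \<in> saturation P X"
      using subset_saturation[OF P ideal_subset_carrier[OF X]] ideal_zero_closed[OF X] by auto
  next
    fix a b assume "a \<in> saturation P X" "b \<in> saturation P X"
    then obtain s t where a: "a \<in> carrier R" "s \<in> carrier R - P" "s \<otimes> a \<in> X"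
      and b: "b \<in> carrier R" "t \<in> carrier R - P" "t \<otimes> b \<in> X"
      by (auto elim!: saturationE)
    have "(t \<otimes> s) \<otimes> (a \<oplus> b) = t \<otimes> (s \<otimes> a) \<oplus> s \<otimes> (t \<otimes> b)"
      using a b by (simp add: r_distr m_ac)
    also have "\<dots> \<in> X"
      using a b ideal.I_l_closed[OF X] ideal_add_closed[OF X] by simp
    finally show "a \<otimes>\<^bsub>add_monoid R\<^esub> b \<in> saturation P X"
      using a b saturationI[OF _ primeideal_compl_mult[OF P b(2) a(2)]] by simp
  next
    fix a assume "a \<in> saturation P X"
    then obtain s where a: "a \<in> carrier R" "s \<in> carrier R - P" "s \<otimes> a \<in> X"
      by (auto elim!: saturationE)
    have "s \<otimes> (\<ominus> a) = \<ominus> (s \<otimes> a)" using a by (simp add: r_minus)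
    then have "s \<otimes> (\<ominus> a) \<in> X"
      using a additive_subgroup.a_inv_closed[OF ideal.axioms(1)[OF X]] by metis
    then show "inv\<^bsub>add_monoid R\<^esub> a \<in> saturation P X"
      using a saturationI[of "\<ominus> a" s] by (simp add: a_inv_def[symmetric])
  qed
next
  fix a x assume "a \<in> saturation P X" and x: "x \<in> carrier R"
  then obtain s where a: "a \<in> carrier R" "s \<in> carrier R - P" "s \<otimes> a \<in> X"
    by (auto elim!: saturationE)
  have "s \<otimes> (x \<otimes> a) = x \<otimes> (s \<otimes> a)" using a x by (simp add: m_lcomm)
  then have "s \<otimes> (x \<otimes> a) \<in> X" using ideal.I_l_closed[OF X a(3) x] by simp
  then show "x \<otimes> a \<in> saturation P X" using a x saturationI[of "x \<otimes> a" s] by simp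
  then show "a \<otimes> x \<in> saturation P X" using a x by (simp add: m_comm)
qed

lemma saturation_idem:
  assumes "primeideal P R" shows "saturation P (saturation P X) = saturation P X"
proof
  show "saturation P (saturation P X) \<subseteq> saturation P X"
  proof
    fix a assume "a \<in> saturation P (saturation P X)"
    then obtain s where s: "a \<in> carrier R" "s \<in> carrier R - P" "s \<otimes> a \<in> saturation P X"
      by (rule saturationE)
    then obtain t where t: "t \<in> carrier R - P" "t \<otimes> (s \<otimes> a) \<in> X"
      by (auto elim: saturationE)
    then have "(t \<otimes> s) \<otimes> a \<in> X" using s by (simp add: m_assoc)
    then show "a \<in> saturation P X"
      by (rule saturationI[OF s(1) primeideal_compl_mult[OF assms t(1) s(2)]])
  qed
  show "saturation P X \<subseteq> saturation P (saturation P X)"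
    by (rule subset_saturation[OF assms]) (simp add: saturation_def)
qed

lemma saturation_subset_saturation:
  assumes "primeideal P R" "Y \<subseteq> saturation P X" shows "saturation P Y \<subseteq> saturation P X"
  using saturation_mono[OF assms(2)] saturation_idem[OF assms(1)] by blast

lemma saturation_eq_carrier:
  assumes "ideal X R" "\<not> X \<subseteq> P" shows "saturation P X = carrier R"
proof -
  obtain s where s: "s \<in> X" "s \<notin> P" using assms(2) by blast
  then have "a \<in> saturation P X" if "a \<in> carrier R" for a
    using that ideal.I_r_closed[OF assms(1) s(1) that] ideal.Icarr[OF assms(1) s(1)]
      saturationI[of a s] by simp
  then show ?thesis unfolding saturation_def by blast
qed

lemma saturation_carrier:
  assumes "primeideal P R" shows "saturation P (carrier R) = carrier R"
proof (rule saturation_eq_carrier[OF oneideal])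
  show "\<not> carrier R \<subseteq> P"
    using primeideal.I_notcarr[OF assms] ideal_subset_carrier[OF primeideal.axioms(1)[OF assms]]
    by blast
qed

lemma saturation_subset_primeideal:
  assumes "primeideal P R" "X \<subseteq> P" shows "saturation P X \<subseteq> P"
proof
  fix a assume "a \<in> saturation P X"
  then obtain s where "a \<in> carrier R" "s \<in> carrier R - P" "s \<otimes> a \<in> X"
    by (rule saturationE)
  then show "a \<in> P" using primeideal.I_prime[OF assms(1)] assms(2) by blast
qed

lemma saturation_primeideal:
  assumes "primeideal Q R" "Q \<subseteq> P" "primeideal P R" shows "saturation P Q = Q"
proof
  show "saturation P Q \<subseteq> Q"
    using saturation_antimono[OF assms(2)] saturation_subset_primeideal[OF assms(1) order_refl]
    by blast
  show "Q \<subseteq> saturation P Q"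
    using subset_saturation[OF assms(3) ideal_subset_carrier[OF primeideal.axioms(1)[OF assms(1)]]] .
qed

lemma saturation_cancel:
  assumes "primeideal P R" "x \<in> carrier R - P" "r \<in> carrier R" "x \<otimes> r \<in> saturation P X"
  shows "r \<in> saturation P X"
proof -
  obtain s where s: "s \<in> carrier R - P" "s \<otimes> (x \<otimes> r) \<in> X"
    using assms(4) by (rule saturationE)
  then have "(s \<otimes> x) \<otimes> r \<in> X" using assms(2,3) by (simp add: m_assoc)
  then show ?thesis
    by (rule saturationI[OF assms(3) primeideal_compl_mult[OF assms(1) s(1) assms(2)]])
qed

lemma ideal_prod_saturation:
  assumes P: "primeideal P R" and I: "ideal I R" and X: "ideal X R"
  shows "I \<cdot> saturation P X \<subseteq> saturation P (I \<cdot> X)"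
proof
  fix z assume "z \<in> I \<cdot> saturation P X"
  then show "z \<in> saturation P (I \<cdot> X)"
  proof induct
    case (prod i a)
    then obtain s where a: "a \<in> carrier R" "s \<in> carrier R - P" "s \<otimes> a \<in> X"
      by (auto elim: saturationE)
    have i: "i \<in> carrier R" using ideal.Icarr[OF I prod(1)] .
    have "s \<otimes> (i \<otimes> a) = i \<otimes> (s \<otimes> a)" using a i by (simp add: m_lcomm)
    also have "\<dots> \<in> I \<cdot> X" using prod(1) a(3) by (rule ideal_prod.prod)
    finally show ?case using saturationI[OF _ a(2)] a i by simp
  next
    case (sum z1 z2)
    then show ?case
      using ideal_add_closed[OF saturation_ideal[OF P ideal_prod_is_ideal[OF I X]]] by blast
  qed
qed

lemma set_add_subset_saturation:
  assumes "primeideal P R" "ideal X R" "A \<subseteq> saturation P X" "B \<subseteq> saturation P X"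
  shows "A <+>\<^bsub>R\<^esub> B \<subseteq> saturation P X"
  using ideal_sum_least[OF saturation_ideal[OF assms(1,2)] assms(3,4)] .

lemma saturation_modular:
  assumes P: "primeideal P R" and A: "ideal A R" and B: "ideal B R" and C: "ideal C R"
    and AB: "A \<subseteq> B" and B_sat: "B \<subseteq> saturation P (A <+>\<^bsub>R\<^esub> C)"
  shows "B \<subseteq> saturation P (A <+>\<^bsub>R\<^esub> (B \<inter> C))"
proof
  fix b assume b: "b \<in> B"
  then obtain s where s: "s \<in> carrier R - P" "s \<otimes> b \<in> A <+>\<^bsub>R\<^esub> C"
    using B_sat by (auto elim: saturationE)
  then obtain a c where a: "a \<in> A" and c: "c \<in> C" and sb: "s \<otimes> b = a \<oplus> c"
    unfolding set_add_iff by blast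
  have carr: "a \<in> carrier R" "b \<in> carrier R" "c \<in> carrier R"
    using ideal.Icarr[OF A a] ideal.Icarr[OF B b] ideal.Icarr[OF C c] .
  have "c = s \<otimes> b \<ominus> a" using sb carr s(1) by algebra
  then have "c \<in> B"
    using ideal_diff_closed[OF B ideal.I_l_closed[OF B b] AB[THEN subsetD, OF a]] s(1)
    by simp
  then have "s \<otimes> b \<in> A <+>\<^bsub>R\<^esub> (B \<inter> C)" using sb a c unfolding set_add_iff by blast
  then show "b \<in> saturation P (A <+>\<^bsub>R\<^esub> (B \<inter> C))" using saturationI[OF _ s(1)] carr by blast
qed

lemma PIdl_inter_saturation:
  assumes P: "primeideal P R" and x: "x \<in> carrier R - P" and X: "ideal X R"
  shows "PIdl x \<inter> saturation P X \<subseteq> (PIdl x) \<cdot> (saturation P X)"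
proof
  fix y assume "y \<in> PIdl x \<inter> saturation P X"
  then obtain r where r: "r \<in> carrier R" "y = r \<otimes> x" "r \<otimes> x \<in> saturation P X"
    unfolding cgenideal_def by blast
  then have "r \<in> saturation P X"
    using saturation_cancel[OF P x r(1)] x by (simp add: m_comm)
  then have "x \<otimes> r \<in> (PIdl x) \<cdot> (saturation P X)"
    using cgenideal_self x by (blast intro: ideal_prod.prod)
  then show "y \<in> (PIdl x) \<cdot> (saturation P X)" using r x by (simp add: m_comm)
qed

lemma set_add_ideal_prod_subset:
  assumes I: "ideal I R" and W: "ideal W R" and M: "ideal M R" and N: "ideal N R"
  shows "W <+>\<^bsub>R\<^esub> (I \<cdot> M <+>\<^bsub>R\<^esub> I \<cdot> N) \<subseteq> (W <+>\<^bsub>R\<^esub> N) <+>\<^bsub>R\<^esub> I \<cdot> M"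
proof -
  let ?T = "(W <+>\<^bsub>R\<^esub> N) <+>\<^bsub>R\<^esub> I \<cdot> M"
  have WN: "ideal (W <+>\<^bsub>R\<^esub> N) R" and IM: "ideal (I \<cdot> M) R"
    using add_ideals[OF W N] ideal_prod_is_ideal[OF I M] .
  have T: "ideal ?T R" using add_ideals[OF WN IM] .
  have WN_T: "W <+>\<^bsub>R\<^esub> N \<subseteq> ?T" using ideal_sum_upper1[OF WN IM] .
  have "I \<cdot> N \<subseteq> ?T"
    using ideal_prod_inter[OF I N] ideal_sum_upper2[OF W N] WN_T by blast
  then have "I \<cdot> M <+>\<^bsub>R\<^esub> I \<cdot> N \<subseteq> ?T"
    by (rule ideal_sum_least[OF T ideal_sum_upper2[OF WN IM]])
  moreover have "W \<subseteq> ?T" using ideal_sum_upper1[OF W N] WN_T by blast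
  ultimately show ?thesis by (rule ideal_sum_least[OF T, rotated])
qed

lemma set_add_ideal_prod_subset_saturation:
  assumes P: "primeideal P R" and I: "ideal I R" and W: "ideal W R" and N: "ideal N R"
    and M_sat: "M \<subseteq> saturation P (W <+>\<^bsub>R\<^esub> N)"
  shows "W <+>\<^bsub>R\<^esub> (I \<cdot> M <+>\<^bsub>R\<^esub> I \<cdot> N) \<subseteq> saturation P (W <+>\<^bsub>R\<^esub> (I \<cdot> N))"
proof -
  have WIN: "ideal (W <+>\<^bsub>R\<^esub> (I \<cdot> N)) R" using add_ideals[OF W ideal_prod_is_ideal[OF I N]] .
  have WIN_sat: "W <+>\<^bsub>R\<^esub> (I \<cdot> N) \<subseteq> saturation P (W <+>\<^bsub>R\<^esub> (I \<cdot> N))"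
    using subset_saturation[OF P ideal_subset_carrier[OF WIN]] .
  have "I \<cdot> M \<subseteq> saturation P (I \<cdot> (W <+>\<^bsub>R\<^esub> N))"
    using ideal_prod_mono2[OF M_sat] ideal_prod_saturation[OF P I add_ideals[OF W N]] by blast
  also have "\<dots> \<subseteq> saturation P (W <+>\<^bsub>R\<^esub> (I \<cdot> N))"
    unfolding ideal_prod_r_distr[OF I W N]
    using ideal_prod_inter[OF I W] by (intro saturation_mono set_add_mono) auto
  finally have IMN_sat: "I \<cdot> M <+>\<^bsub>R\<^esub> I \<cdot> N \<subseteq> saturation P (W <+>\<^bsub>R\<^esub> (I \<cdot> N))"
    using WIN_sat ideal_sum_upper2[OF W ideal_prod_is_ideal[OF I N]]
    by (intro set_add_subset_saturation[OF P WIN]) blast+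
  show ?thesis
    using WIN_sat ideal_sum_upper1[OF W ideal_prod_is_ideal[OF I N]]
    by (intro set_add_subset_saturation[OF P WIN _ IMN_sat]) blast
qed

lemma saturation_principal_cancel:
  assumes P: "primeideal P R" and I: "ideal I R" "I \<subseteq> P" and W: "ideal W R"
    and m: "m \<in> carrier R" and m_sat: "m \<in> saturation P (W <+>\<^bsub>R\<^esub> (I \<cdot> (PIdl m)))"
  shows "m \<in> saturation P W"
proof -
  obtain s where s: "s \<in> carrier R - P" "s \<otimes> m \<in> W <+>\<^bsub>R\<^esub> (I \<cdot> (PIdl m))"
    using m_sat by (rule saturationE)
  then obtain w z where w: "w \<in> W" and z: "z \<in> I \<cdot> (PIdl m)" and sm: "s \<otimes> m = w \<oplus> z"
    unfolding set_add_iff by blast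
  obtain q where q: "q \<in> I" "z = q \<otimes> m" using ideal_prod_PIdl[OF I(1) m z] by blast
  have q_carr: "q \<in> carrier R" using ideal.Icarr[OF I(1) q(1)] .
  have carr: "s \<in> carrier R" "w \<in> carrier R" using s(1) ideal.Icarr[OF W w] by auto
  have "(s \<ominus> q) \<otimes> m = w"
    using sm q(2) carr q_carr m by algebra
  moreover have "s \<ominus> q \<in> carrier R - P"
  proof -
    have "s = (s \<ominus> q) \<oplus> q" using carr q_carr by algebra
    then show ?thesis
      using s(1) q I(2) q_carr ideal_add_closed[OF primeideal.axioms(1)[OF P]] by fastforce
  qed
  ultimately show ?thesis using saturationI[OF m _ ] w by simp
qed

definition colon :: "'a set \<Rightarrow> 'a \<Rightarrow> 'a set" where
  "colon X a = {b \<in> carrier R. b \<otimes> a \<in> X}"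

lemma colon_ideal:
  assumes X: "ideal X R" and a: "a \<in> carrier R"
  shows "ideal (colon X a) R"
proof (rule idealI)
  show "ring R" by (rule ring_axioms)
  show "subgroup (colon X a) (add_monoid R)"
  proof (rule subgroup.intro)
    show "colon X a \<subseteq> carrier (add_monoid R)" unfolding colon_def by auto
    show "\<one>\<^bsub>add_monoid R\<^esub> \<in> colon X a" unfolding colon_def using a ideal_zero_closed[OF X] by simp
  next
    fix b c assume "b \<in> colon X a" "c \<in> colon X a"
    then show "b \<otimes>\<^bsub>add_monoid R\<^esub> c \<in> colon X a"
      unfolding colon_def using a ideal_add_closed[OF X] by (simp add: l_distr)
  next
    fix b assume b: "b \<in> colon X a"
    then have "(\<ominus> b) \<otimes> a = \<ominus> (b \<otimes> a)" using a unfolding colon_def by (simp add: l_minus)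
    then show "inv\<^bsub>add_monoid R\<^esub> b \<in> colon X a"
      using b additive_subgroup.a_inv_closed[OF ideal.axioms(1)[OF X]] unfolding colon_def
      by (simp add: a_inv_def[symmetric])
  qed
next
  fix b x assume b: "b \<in> colon X a" and x: "x \<in> carrier R"
  then have "(x \<otimes> b) \<otimes> a = x \<otimes> (b \<otimes> a)" using a unfolding colon_def by (simp add: m_assoc)
  then show "x \<otimes> b \<in> colon X a" using b x ideal.I_l_closed[OF X] unfolding colon_def by simp
  then show "b \<otimes> x \<in> colon X a" using b x unfolding colon_def by (simp add: m_comm)
qed

lemma maximal_colon_primeideal:
  assumes X: "ideal X R" and a: "a \<in> carrier R" "a \<notin> X"
    and max: "\<And>b. b \<in> carrier R \<Longrightarrow> b \<notin> X \<Longrightarrow> colon X a \<subseteq> colon X b \<Longrightarrow> colon X b = colon X a"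
  shows "primeideal (colon X a) R"
proof (rule primeidealI[OF colon_ideal[OF X a(1)] is_cring])
  show "carrier R \<noteq> colon X a"
  proof
    assume "carrier R = colon X a"
    then have "\<one> \<in> colon X a" using one_closed by simp
    then have "\<one> \<otimes> a \<in> X" unfolding colon_def by simp
    then show False using a by simp
  qed
next
  fix b c assume b: "b \<in> carrier R" and c: "c \<in> carrier R" and bc: "b \<otimes> c \<in> colon X a"
  have "c \<in> colon X a" if "b \<notin> colon X a"
  proof -
    from that have ba: "b \<otimes> a \<in> carrier R" "b \<otimes> a \<notin> X" using b a unfolding colon_def by auto
    have "colon X a \<subseteq> colon X (b \<otimes> a)"
    proof
      fix y assume "y \<in> colon X a"
      then have y: "y \<in> carrier R" "y \<otimes> a \<in> X" unfolding colon_def by auto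
      then have "y \<otimes> (b \<otimes> a) = b \<otimes> (y \<otimes> a)" using b a by (simp add: m_lcomm)
      then show "y \<in> colon X (b \<otimes> a)"
        unfolding colon_def using ideal.I_l_closed[OF X y(2) b] y by simp
    qed
    then have eq: "colon X (b \<otimes> a) = colon X a" using max[OF ba] by blast
    have "c \<otimes> (b \<otimes> a) = (b \<otimes> c) \<otimes> a" using a b c by (simp add: m_ac)
    then have "c \<in> colon X (b \<otimes> a)" using bc c unfolding colon_def by simp
    then show "c \<in> colon X a" using eq by simp
  qed
  then show "b \<in> colon X a \<or> c \<in> colon X a" by blast
qed

text \<open>Descending chains of ideals of \<open>R\<^sub>P\<close> lying between the extensions of \<open>J\<close> and \<open>K\<close>
  are stationary.\<close>

definition loc_dcc :: "'a set \<Rightarrow> 'a set \<Rightarrow> 'a set \<Rightarrow> bool" where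
  "loc_dcc P J K \<longleftrightarrow>
     (\<forall>I. (\<forall>n. ideal (I n) R \<and> J \<subseteq> I n \<and> I n \<subseteq> saturation P K \<and> I (Suc n) \<subseteq> I n)
        \<longrightarrow> (\<exists>n. \<forall>m\<ge>n. I n \<subseteq> saturation P (I m)))"

lemma loc_dccI:
  assumes "\<And>I. (\<And>n. ideal (I n) R) \<Longrightarrow> (\<And>n. J \<subseteq> I n) \<Longrightarrow> (\<And>n. I n \<subseteq> saturation P K)
    \<Longrightarrow> (\<And>n. I (Suc n) \<subseteq> I n) \<Longrightarrow> \<exists>n. \<forall>m\<ge>n. I n \<subseteq> saturation P (I m)"
  shows "loc_dcc P J K"
  unfolding loc_dcc_def using assms by blast

lemma loc_dccD:
  assumes "loc_dcc P J K" "\<And>n. ideal (I n) R" "\<And>n. J \<subseteq> I n" "\<And>n. I n \<subseteq> saturation P K"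
    "\<And>n. I (Suc n) \<subseteq> I n"
  shows "\<exists>n. \<forall>m\<ge>n. I n \<subseteq> saturation P (I m)"
  using assms unfolding loc_dcc_def by blast

lemma loc_dcc_refl: "loc_dcc P J J"
proof (rule loc_dccI)
  fix I :: "nat \<Rightarrow> 'a set"
  assume "\<And>n. J \<subseteq> I n" "\<And>n. I n \<subseteq> saturation P J"
  then have "I 0 \<subseteq> saturation P (I m)" for m using saturation_mono by blast
  then show "\<exists>n. \<forall>m\<ge>n. I n \<subseteq> saturation P (I m)" by blast
qed

lemma subset_saturation_of_generator_notin:
  assumes P: "primeideal P R" and K: "ideal K R" and I: "ideal I R" and g: "g \<in> carrier R"
    and Pg: "\<forall>r\<in>P. r \<otimes> g \<in> saturation P K"
    and I_sat: "I \<subseteq> saturation P (K <+>\<^bsub>R\<^esub> PIdl g)"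
    and g_notin: "g \<notin> saturation P (I <+>\<^bsub>R\<^esub> K)"
  shows "I \<subseteq> saturation P K"
proof
  fix a assume a: "a \<in> I"
  then obtain s where s: "s \<in> carrier R - P" "s \<otimes> a \<in> K <+>\<^bsub>R\<^esub> PIdl g"
    using I_sat by (auto elim: saturationE)
  then obtain k r where k: "k \<in> K" and r: "r \<in> carrier R" and sa: "s \<otimes> a = k \<oplus> r \<otimes> g"
    unfolding set_add_iff cgenideal_def by blast
  have carr: "a \<in> carrier R" "k \<in> carrier R" using ideal.Icarr[OF I a] ideal.Icarr[OF K k] .
  have satK: "ideal (saturation P K) R" using saturation_ideal[OF P K] .
  have "r \<in> P"
  proof (rule ccontr)
    assume "r \<notin> P"
    have "r \<otimes> g = s \<otimes> a \<oplus> \<ominus> k" using sa carr r g s(1) by algebra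
    moreover have "s \<otimes> a \<in> I" "\<ominus> k \<in> K"
      using ideal.I_l_closed[OF I a] s(1) additive_subgroup.a_inv_closed[OF ideal.axioms(1)[OF K] k]
      by auto
    ultimately have "r \<otimes> g \<in> I <+>\<^bsub>R\<^esub> K" unfolding set_add_iff by blast
    then show False using g_notin saturationI[OF g _ _] r \<open>r \<notin> P\<close> by blast
  qed
  then have "k \<oplus> r \<otimes> g \<in> saturation P K"
    using Pg subset_saturation[OF P ideal_subset_carrier[OF K]] k ideal_add_closed[OF satK] by blast
  then have "a \<in> saturation P (saturation P K)" using saturationI[OF carr(1) s(1)] sa by simp
  then show "a \<in> saturation P K" using saturation_idem[OF P] by simp
qed

lemma subset_saturation_of_generator_mem:
  assumes P: "primeideal P R" and K: "ideal K R" and A: "ideal A R" and B: "ideal B R"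
    and g: "g \<in> carrier R" and AB: "A \<subseteq> B"
    and B_sat: "B \<subseteq> saturation P (K <+>\<^bsub>R\<^esub> PIdl g)"
    and g_mem: "g \<in> saturation P (A <+>\<^bsub>R\<^esub> K)"
    and BK: "B \<inter> K \<subseteq> saturation P A"
  shows "B \<subseteq> saturation P A"
proof -
  have AK: "ideal (A <+>\<^bsub>R\<^esub> K) R" using add_ideals[OF A K] .
  have "K \<subseteq> saturation P (A <+>\<^bsub>R\<^esub> K)"
    using ideal_sum_upper2[OF A K] subset_saturation[OF P ideal_subset_carrier[OF AK]]
    by (rule order_trans)
  moreover have "PIdl g \<subseteq> saturation P (A <+>\<^bsub>R\<^esub> K)"
    using cgenideal_minimal[OF saturation_ideal[OF P AK] g_mem] .
  ultimately have "K <+>\<^bsub>R\<^esub> PIdl g \<subseteq> saturation P (A <+>\<^bsub>R\<^esub> K)"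
    by (rule set_add_subset_saturation[OF P AK])
  then have "B \<subseteq> saturation P (A <+>\<^bsub>R\<^esub> K)"
    using B_sat saturation_subset_saturation[OF P] by blast
  then have "B \<subseteq> saturation P (A <+>\<^bsub>R\<^esub> (B \<inter> K))"
    by (rule saturation_modular[OF P A B K AB])
  also have "\<dots> \<subseteq> saturation P A"
    using subset_saturation[OF P ideal_subset_carrier[OF A]] BK
    by (intro saturation_subset_saturation[OF P] set_add_subset_saturation[OF P A])
  finally show ?thesis .
qed

text \<open>\<open>pow_plus w p n\<close> is the ideal \<open>w + p\<^sup>n\<close>.\<close>

primrec pow_plus :: "'a set \<Rightarrow> 'a set \<Rightarrow> nat \<Rightarrow> 'a set" where
  "pow_plus w p 0 = carrier R"
| "pow_plus w p (Suc n) = w <+>\<^bsub>R\<^esub> (p \<cdot> (pow_plus w p n))"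

lemma pow_plus_ideal: "ideal w R \<Longrightarrow> ideal p R \<Longrightarrow> ideal (pow_plus w p n) R"
  by (induction n) (simp_all add: oneideal add_ideals ideal_prod_is_ideal)

lemma subset_pow_plus: "ideal w R \<Longrightarrow> ideal p R \<Longrightarrow> w \<subseteq> pow_plus w p n"
  by (cases n)
    (simp_all add: ideal_subset_carrier ideal_sum_upper1 ideal_prod_is_ideal pow_plus_ideal)

lemma pow_plus_Suc_subset:
  assumes w: "ideal w R" and p: "ideal p R"
  shows "pow_plus w p (Suc n) \<subseteq> pow_plus w p n"
proof (induction n)
  case 0
  then show ?case
    using ideal_subset_carrier add_ideals[OF w ideal_prod_is_ideal[OF p oneideal]] by simp
next
  case (Suc n)
  then show ?case
    using set_add_mono[OF order_refl ideal_prod_mono2[OF Suc]]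
    by (simp only: pow_plus.simps(2))
qed

lemma pow_mem_pow_plus:
  assumes w: "ideal w R" and a: "a \<in> p" "a \<in> carrier R"
  shows "a [^] n \<in> pow_plus w p n"
proof (induction n)
  case 0
  then show ?case by simp
next
  case (Suc n)
  have "\<zero> \<oplus> a \<otimes> a [^] n \<in> pow_plus w p (Suc n)"
    using ideal_zero_closed[OF w] ideal_prod.prod[OF a(1) Suc] unfolding pow_plus.simps set_add_iff
    by blast
  then show ?case using a(2) by (simp add: m_comm)
qed

definition minimal_primes :: "'a set \<Rightarrow> 'a set set" where
  "minimal_primes I =
     {P. primeideal P R \<and> I \<subseteq> P \<and> (\<forall>Q. primeideal Q R \<and> I \<subseteq> Q \<and> Q \<subseteq> P \<longrightarrow> Q = P)}"

lemma minimal_primes_set_add: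
  assumes I: "ideal I R" and P: "P \<in> minimal_primes I" and c: "c \<in> P" "c \<in> carrier R"
  shows "P \<in> minimal_primes (I <+>\<^bsub>R\<^esub> PIdl c)"
proof -
  have c_id: "ideal (PIdl c) R" using cgenideal_ideal[OF c(2)] .
  have Pp: "primeideal P R" and IP: "I \<subseteq> P" using P unfolding minimal_primes_def by blast+
  have "I <+>\<^bsub>R\<^esub> PIdl c \<subseteq> P"
    using ideal_sum_least[OF primeideal.axioms(1)[OF Pp] IP
        cgenideal_minimal[OF primeideal.axioms(1)[OF Pp] c(1)]] .
  moreover have "Q = P" if "primeideal Q R" "I <+>\<^bsub>R\<^esub> PIdl c \<subseteq> Q" "Q \<subseteq> P" for Q
    using P that ideal_sum_upper1[OF I c_id] unfolding minimal_primes_def by blast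
  ultimately show ?thesis using Pp unfolding minimal_primes_def by blast
qed

lemma minimal_primes_subset_Un:
  assumes I: "ideal I R" and ab: "a \<in> carrier R" "b \<in> carrier R" "a \<otimes> b \<in> I"
  shows "minimal_primes I \<subseteq> minimal_primes (I <+>\<^bsub>R\<^esub> PIdl a) \<union> minimal_primes (I <+>\<^bsub>R\<^esub> PIdl b)"
proof
  fix P assume P: "P \<in> minimal_primes I"
  then have "a \<in> P \<or> b \<in> P"
    using ab primeideal.I_prime[of P R a b] unfolding minimal_primes_def by blast
  then show "P \<in> minimal_primes (I <+>\<^bsub>R\<^esub> PIdl a) \<union> minimal_primes (I <+>\<^bsub>R\<^esub> PIdl b)"
    using minimal_primes_set_add[OF I P] ab by blast
qed

lemma not_primeideal_witness:
  assumes "ideal I R" "I \<noteq> carrier R" "\<not> primeideal I R"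
  obtains a b where "a \<in> carrier R" "b \<in> carrier R" "a \<notin> I" "b \<notin> I" "a \<otimes> b \<in> I"
  using assms primeidealI[OF assms(1) is_cring] by metis

lemma exists_mem_primes_notin:
  assumes P: "primeideal P R" and I: "ideal I R" "\<not> I \<subseteq> P"
    and G: "finite G" "\<forall>Q\<in>G. primeideal Q R \<and> \<not> Q \<subseteq> P"
  shows "\<exists>c\<in>I. c \<notin> P \<and> (\<forall>Q\<in>G. c \<in> Q)"
  using G
proof (induction G rule: finite_induct)
  case empty
  then show ?case using I(2) by blast
next
  case (insert Q G)
  then obtain c where c: "c \<in> I" "c \<notin> P" "\<forall>Q'\<in>G. c \<in> Q'" by blast
  obtain d where d: "d \<in> Q" "d \<notin> P" and Q: "primeideal Q R" using insert.prems by blast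
  have carr: "d \<in> carrier R" "c \<in> carrier R"
    using ideal.Icarr[OF primeideal.axioms(1)[OF Q] d(1)] ideal.Icarr[OF I(1) c(1)] .
  have "d \<otimes> c \<in> I" using ideal.I_l_closed[OF I(1) c(1) carr(1)] .
  moreover have "d \<otimes> c \<notin> P" using primeideal.I_prime[OF P carr] d(2) c(2) by blast
  moreover have "d \<otimes> c \<in> Q" using ideal.I_r_closed[OF primeideal.axioms(1)[OF Q] d(1) carr(2)] .
  moreover have "d \<otimes> c \<in> Q'" if "Q' \<in> G" for Q'
    using ideal.I_l_closed[OF primeideal.axioms(1) c(3)[rule_format, OF that] carr(1)]
      insert.prems that by blast
  ultimately show ?case by blast
qed

lemma prime_avoidance_step:
  assumes P: "primeideal P R" and I: "ideal I R" "\<not> I \<subseteq> P"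
    and G: "finite G" "\<forall>Q\<in>G. primeideal Q R \<and> \<not> Q \<subseteq> P"
    and b: "b \<in> I" "\<forall>Q\<in>G. b \<notin> Q"
  shows "\<exists>a\<in>I. a \<notin> P \<and> (\<forall>Q\<in>G. a \<notin> Q)"
proof (cases "b \<in> P")
  case False
  then show ?thesis using b by blast
next
  case True
  obtain c where c: "c \<in> I" "c \<notin> P" "\<forall>Q\<in>G. c \<in> Q"
    using exists_mem_primes_notin[OF P I G] by blast
  have carr: "b \<in> carrier R" "c \<in> carrier R" using ideal.Icarr[OF I(1)] b(1) c(1) by auto
  have "b \<oplus> c \<notin> P" using ideal_add_notin[OF primeideal.axioms(1)[OF P] carr True c(2)] .
  moreover have "b \<oplus> c \<notin> Q" if "Q \<in> G" for Q
    using ideal_add_notin[OF primeideal.axioms(1) carr(2,1)] b(2) c(3) G(2) that carr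
    by (simp add: a_comm)
  ultimately show ?thesis using ideal_add_closed[OF I(1) b(1) c(1)] by blast
qed

theorem prime_avoidance:
  assumes I: "ideal I R" and F: "finite F" "\<forall>Q\<in>F. primeideal Q R \<and> \<not> I \<subseteq> Q"
  shows "\<exists>a\<in>I. \<forall>Q\<in>F. a \<notin> Q"
  using F
proof (induction F rule: finite_psubset_induct)
  case (psubset F)
  show ?case
  proof (cases "F = {}")
    case True
    then show ?thesis using ideal_zero_closed[OF I] by blast
  next
    case False
    then obtain P where PF: "P \<in> F" by blast
    have P: "primeideal P R" "\<not> I \<subseteq> P" using psubset.prems PF by blast+
    have avoid: "\<exists>a\<in>I. \<forall>Q\<in>F - {Q0}. a \<notin> Q" if "Q0 \<in> F" for Q0
      using psubset.IH[of "F - {Q0}"] psubset.prems that by blast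
    show ?thesis
    proof (cases "\<exists>Q\<in>F - {P}. Q \<subseteq> P")
      case True
      then obtain Q where Q: "Q \<in> F - {P}" "Q \<subseteq> P" by blast
      then obtain c where c: "c \<in> I" "\<forall>Q'\<in>F - {Q}. c \<notin> Q'" using avoid by blast
      then have "c \<notin> P" using Q PF by blast
      then have "c \<notin> Q" using Q(2) by blast
      then have "\<forall>Q'\<in>F. c \<notin> Q'" using c(2) by auto
      then show ?thesis using c(1) by blast
    next
      case False
      then have "\<forall>Q\<in>F - {P}. primeideal Q R \<and> \<not> Q \<subseteq> P" using psubset.prems by blast
      moreover obtain b where "b \<in> I" "\<forall>Q\<in>F - {P}. b \<notin> Q" using avoid[OF PF] by blast
      ultimately obtain a where "a \<in> I" "a \<notin> P" "\<forall>Q\<in>F - {P}. a \<notin> Q"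
        using prime_avoidance_step[OF P(1) I P(2) finite_Diff[OF psubset.hyps]] by blast
      then show ?thesis by blast
    qed
  qed
qed

lemma mem_Spec: "P \<in> Spec R \<longleftrightarrow> primeideal P R"
  unfolding Spec_def by simp

lemma mub_Spec_subset:
  assumes u: "primeideal u R" and v: "primeideal v R"
  shows "mub (Spec R) (\<subseteq>) {u, v} \<subseteq> minimal_primes (u <+>\<^bsub>R\<^esub> v)"
proof
  fix W assume W: "W \<in> mub (Spec R) (\<subseteq>) {u, v}"
  have ideals: "ideal u R" "ideal v R" using u v primeideal.axioms(1) by blast+
  have W_prime: "primeideal W R" and uv_W: "u \<subseteq> W" "v \<subseteq> W"
    using W unfolding mub_def minset_def mem_Spec by auto
  have "u <+>\<^bsub>R\<^esub> v \<subseteq> W" by (rule ideal_sum_least[OF primeideal.axioms(1)[OF W_prime] uv_W])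
  moreover have "Q = W" if Q: "primeideal Q R" "u <+>\<^bsub>R\<^esub> v \<subseteq> Q" "Q \<subseteq> W" for Q
  proof -
    have "u \<subseteq> Q" "v \<subseteq> Q"
      using Q(2) ideal_sum_upper1[OF ideals] ideal_sum_upper2[OF ideals] by auto
    then show ?thesis using W Q(1,3) unfolding mub_def minset_def mem_Spec by simp
  qed
  ultimately show "W \<in> minimal_primes (u <+>\<^bsub>R\<^esub> v)"
    unfolding minimal_primes_def using W_prime by blast
qed

end

lemma card_chain_le_pdim:
  assumes "C \<subseteq> U" "C \<noteq> {}" "finite C" "\<forall>x\<in>C. \<forall>y\<in>C. r x y \<or> r y x"
  shows "enat (card C - 1) \<le> pdim U r"
proof -
  have "C \<in> fin_chains U r" unfolding fin_chains_def using assms by blast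
  then show ?thesis unfolding pdim_def by (rule SUP_upper)
qed

lemma pdim_mono: "U \<subseteq> V \<Longrightarrow> pdim U r \<le> pdim V r"
  unfolding pdim_def fin_chains_def by (rule SUP_subset_mono) auto

lemma pdim_le_2_no_chain4:
  fixes U :: "'x set set"
  assumes "pdim U (\<subseteq>) \<le> 2" "A \<in> U" "B \<in> U" "C \<in> U" "D \<in> U" "A \<subset> B" "B \<subset> C" "C \<subset> D"
  shows False
proof -
  have "A \<noteq> B" "A \<noteq> C" "A \<noteq> D" "B \<noteq> C" "B \<noteq> D" "C \<noteq> D" using assms(6-8) by auto
  then have "card {A, B, C, D} = 4" by simp
  moreover have "enat (card {A, B, C, D} - 1) \<le> pdim U (\<subseteq>)"
    by (rule card_chain_le_pdim) (use assms in auto)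
  ultimately have "enat 3 \<le> 2" using assms(1) by simp
  then show False by (simp add: numeral_eq_enat)
qed

lemma pheight_eq_2:
  fixes U :: "'x set set"
  assumes "pdim U (\<subseteq>) \<le> 2" "A \<in> U" "B \<in> U" "T \<in> U" "A \<subset> B" "B \<subset> T"
  shows "pheight U (\<subseteq>) T = 2"
proof -
  have "pheight U (\<subseteq>) T \<le> pdim U (\<subseteq>)"
    unfolding pheight_def by (rule pdim_mono) (auto simp: downset_def)
  moreover have "A \<noteq> B" "A \<noteq> T" "B \<noteq> T" using assms(5,6) by auto
  then have "card {A, B, T} = 3" by simp
  moreover have "enat (card {A, B, T} - 1) \<le> pheight U (\<subseteq>) T"
    unfolding pheight_def by (rule card_chain_le_pdim) (use assms in \<open>auto simp: downset_def\<close>)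
  ultimately show ?thesis using assms(1) by (simp add: numeral_eq_enat)
qed

lemma not_between_cases:
  fixes U :: "'x set set"
  assumes dim: "pdim U (\<subseteq>) \<le> 2" and U: "w \<in> U" "Q \<in> U" "u \<in> U" and "w \<subset> Q" "Q \<subset> u"
    and "Q \<notin> between U (\<subseteq>) u w"
  shows "(\<exists>T\<in>Hlevel U (\<subseteq>) 2. T \<noteq> u \<and> Q \<subseteq> T) \<or> (\<exists>T\<in>minset U (\<subseteq>). T \<noteq> w \<and> Q \<in> mub U (\<subseteq>) {w, T})"
proof -
  have "u \<in> upset U (\<subseteq>) Q - {Q}" "w \<in> downset U (\<subseteq>) Q - {Q}"
    using assms unfolding upset_def downset_def by auto
  then consider (up) T where "T \<in> U" "Q \<subset> T" "T \<noteq> u" | (down) T where "T \<in> U" "T \<subset> Q" "T \<noteq> w"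
    using assms(7) U unfolding between_def upset_def downset_def by blast
  then show ?thesis
  proof cases
    case up
    then have "pheight U (\<subseteq>) T = 2" using pheight_eq_2[OF dim U(1,2)] assms(5) by blast
    then show ?thesis using up unfolding Hlevel_def by (auto simp: numeral_eq_enat)
  next
    case down
    have T_min: "T \<in> minset U (\<subseteq>)"
    proof -
      have "V = T" if "V \<in> U" "V \<subseteq> T" for V
      proof (rule ccontr)
        assume "V \<noteq> T"
        then show False
          using pdim_le_2_no_chain4[OF dim that(1) down(1) U(2,3)] that(2) down(2) assms(6) by blast
      qed
      then show ?thesis unfolding minset_def using down(1) by blast
    qed
    have "W = Q" if W: "W \<in> U" "w \<subseteq> W" "T \<subseteq> W" "W \<subseteq> Q" for W
    proof (rule ccontr)
      assume "W \<noteq> Q"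
      have "W \<noteq> w"
      proof
        assume "W = w"
        then show False
          using pdim_le_2_no_chain4[OF dim down(1) U] W(3) down(3) assms(5,6) by blast
      qed
      then show False using pdim_le_2_no_chain4[OF dim U(1) W(1) U(2,3)] W \<open>W \<noteq> Q\<close> assms(6) by blast
    qed
    then have "Q \<in> mub U (\<subseteq>) {w, T}"
      unfolding mub_def minset_def using U(2) assms(5) down(2) by auto
    then show ?thesis using T_min down by blast
  qed
qed

lemma (in noetherian_ring) exists_maximal_ideal:
  assumes "S \<noteq> {}" "\<And>I. I \<in> S \<Longrightarrow> ideal I R"
  shows "\<exists>M\<in>S. \<forall>X\<in>S. M \<subseteq> X \<longrightarrow> X = M"
proof (rule Zorn_Lemma2, rule ballI)
  fix C assume "C \<in> chains S"
  then have CS: "C \<subseteq> S" and ch: "\<forall>X\<in>C. \<forall>Y\<in>C. X \<subseteq> Y \<or> Y \<subseteq> X"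
    unfolding chains_def chain_subset_def by auto
  show "\<exists>U\<in>S. \<forall>X\<in>C. X \<subseteq> U"
  proof (cases "C = {}")
    case True
    then show ?thesis using assms(1) by blast
  next
    case False
    have "subset.chain {I. ideal I R} C"
      using CS assms(2) ch unfolding subset.chain_def by blast
    then have "\<Union>C \<in> C" using ideal_chain_is_trivial False by blast
    then show ?thesis using CS by blast
  qed
qed

locale noetherian_cring = noetherian_ring + cring

context noetherian_cring
begin

lemma exists_associated_element:
  assumes P: "P \<in> minimal_primes J" and K: "ideal K R" and JK: "J \<subseteq> K" and KP: "K \<subseteq> P"
  shows "\<exists>g\<in>carrier R. g \<notin> saturation P K \<and> (\<forall>r\<in>P. r \<otimes> g \<in> saturation P K)"
proof -
  have Pp: "primeideal P R" using P unfolding minimal_primes_def by blast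
  let ?X = "saturation P K"
  have X: "ideal ?X R" using saturation_ideal[OF Pp K] .
  let ?S = "{colon ?X a | a. a \<in> carrier R \<and> a \<notin> ?X}"
  have "\<one> \<notin> ?X" using saturation_subset_primeideal[OF Pp KP] primeideal_one_notin[OF Pp] by blast
  then have "?S \<noteq> {}" by blast
  moreover have "\<And>I. I \<in> ?S \<Longrightarrow> ideal I R" using colon_ideal[OF X] by blast
  ultimately obtain C where "C \<in> ?S" and C_max: "\<forall>Y\<in>?S. C \<subseteq> Y \<longrightarrow> Y = C"
    using exists_maximal_ideal by meson
  then obtain a where a: "a \<in> carrier R" "a \<notin> ?X" and Ca: "C = colon ?X a" by blast
  have C_prime: "primeideal C R"
    unfolding Ca using C_max Ca by (intro maximal_colon_primeideal[OF X a]) blast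
  have "C \<subseteq> P"
  proof
    fix t assume t: "t \<in> C"
    show "t \<in> P"
    proof (rule ccontr)
      assume "t \<notin> P"
      then have "a \<in> saturation P ?X"
        using t a(1) unfolding Ca colon_def by (auto simp: m_comm intro: saturationI[of a t])
      then show False using a(2) saturation_idem[OF Pp] by simp
    qed
  qed
  moreover have "J \<subseteq> C"
    using JK subset_saturation[OF Pp ideal_subset_carrier[OF K]] ideal.I_r_closed[OF X _ a(1)]
      ideal_subset_carrier[OF X]
    unfolding Ca colon_def by blast
  ultimately have "C = P" using P C_prime unfolding minimal_primes_def by blast
  then show ?thesis using a unfolding Ca colon_def by blast
qed

text \<open>Either the new generator \<open>g\<close> stays, locally at \<open>P\<close>, inside every member of the chain
  modulo \<open>K\<close>, and then the chain is controlled by its intersection with \<open>K\<^sub>P\<close>; or the chain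
  eventually lies in \<open>K\<^sub>P\<close>, where the hypothesis on \<open>K\<close> applies.\<close>

lemma loc_dcc_extend:
  assumes P: "primeideal P R" and K: "ideal K R" and JK: "J \<subseteq> K" and K_dcc: "loc_dcc P J K"
    and g: "g \<in> carrier R" and Pg: "\<forall>r\<in>P. r \<otimes> g \<in> saturation P K"
  shows "loc_dcc P J (K <+>\<^bsub>R\<^esub> PIdl g)"
proof (rule loc_dccI)
  fix I :: "nat \<Rightarrow> 'a set"
  let ?S = "saturation P"
  assume I: "\<And>n. ideal (I n) R" and J: "\<And>n. J \<subseteq> I n" and I_sat: "\<And>n. I n \<subseteq> ?S (K <+>\<^bsub>R\<^esub> PIdl g)"
    and dec: "\<And>n. I (Suc n) \<subseteq> I n"
  have I_antimono: "I m \<subseteq> I n" if "n \<le> m" for n m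
    using lift_Suc_antimono_le[of I, OF dec that] .
  have satK: "ideal (?S K) R" using saturation_ideal[OF P K] .
  have K_satK: "K \<subseteq> ?S K" using subset_saturation[OF P ideal_subset_carrier[OF K]] .
  define I' where "I' n = I n \<inter> ?S K" for n
  have I': "ideal (I' n) R" for n unfolding I'_def using i_intersect[OF I satK] .
  obtain n1 where n1: "\<And>m. n1 \<le> m \<Longrightarrow> I' n1 \<subseteq> ?S (I' m)"
    using loc_dccD[OF K_dcc I', of id] J JK K_satK dec unfolding I'_def by force
  have I'_sat: "?S (I' m) \<subseteq> ?S (I m)" for m unfolding I'_def by (rule saturation_mono) blast
  show "\<exists>n. \<forall>m\<ge>n. I n \<subseteq> ?S (I m)"
  proof (cases "\<forall>m. g \<in> ?S (I m <+>\<^bsub>R\<^esub> K)")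
    case True
    have "I n1 \<subseteq> ?S (I m)" if m: "n1 \<le> m" for m
    proof (rule subset_saturation_of_generator_mem[OF P K I I g I_antimono[OF m] I_sat])
      show "g \<in> ?S (I m <+>\<^bsub>R\<^esub> K)" using True by blast
      show "I n1 \<inter> K \<subseteq> ?S (I m)" using n1[OF m] I'_sat K_satK unfolding I'_def by blast
    qed
    then show ?thesis by blast
  next
    case False
    then obtain m0 where "g \<notin> ?S (I m0 <+>\<^bsub>R\<^esub> K)" by blast
    then have "I m0 \<subseteq> ?S K"
      by (rule subset_saturation_of_generator_notin[OF P K I g Pg I_sat])
    then have "I (max n1 m0) \<subseteq> I' n1"
      unfolding I'_def using I_antimono[of n1 "max n1 m0"] I_antimono[of m0 "max n1 m0"] by auto
    then have "I (max n1 m0) \<subseteq> ?S (I m)" if "m \<ge> max n1 m0" for m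
      using n1[of m] I'_sat[of m] that by auto
    then show ?thesis by blast
  qed
qed

text \<open>An ideal \<open>K\<close> maximal with \<open>loc_dcc P J K\<close> cannot lie in \<open>P\<close>, because an element
  annihilated by \<open>P\<close> modulo \<open>K\<^sub>P\<close> could be adjoined to it. Hence \<open>R\<^sub>P/J R\<^sub>P\<close> is Artinian.\<close>

lemma loc_dcc_carrier:
  assumes P: "P \<in> minimal_primes J" and J: "ideal J R"
  shows "loc_dcc P J (carrier R)"
proof -
  have Pp: "primeideal P R" using P unfolding minimal_primes_def by blast
  let ?S = "{K. ideal K R \<and> J \<subseteq> K \<and> loc_dcc P J K}"
  have "J \<in> ?S" using J loc_dcc_refl by blast
  then obtain K where "K \<in> ?S" and K_max: "\<forall>Y\<in>?S. K \<subseteq> Y \<longrightarrow> Y = K"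
    using exists_maximal_ideal[of ?S] by blast
  then have K: "ideal K R" and JK: "J \<subseteq> K" and K_dcc: "loc_dcc P J K" by auto
  have "\<not> K \<subseteq> P"
  proof
    assume "K \<subseteq> P"
    then obtain g where g: "g \<in> carrier R" "g \<notin> saturation P K" "\<forall>r\<in>P. r \<otimes> g \<in> saturation P K"
      using exists_associated_element[OF P K JK] by blast
    let ?K' = "K <+>\<^bsub>R\<^esub> PIdl g"
    have K'_ideal: "ideal ?K' R" using add_ideals[OF K cgenideal_ideal[OF g(1)]] .
    have KK': "K \<subseteq> ?K'" using ideal_sum_upper1[OF K cgenideal_ideal[OF g(1)]] .
    have "loc_dcc P J ?K'" using loc_dcc_extend[OF Pp K JK K_dcc g(1) g(3)] .
    then have "?K' = K" using K_max K'_ideal JK KK' by blast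
    moreover have "g \<in> ?K'"
      using ideal_sum_upper2[OF K cgenideal_ideal[OF g(1)]] cgenideal_self[OF g(1)] by blast
    ultimately show False using g(2) subset_saturation[OF Pp ideal_subset_carrier[OF K]] by blast
  qed
  then have "saturation P K = saturation P (carrier R)"
    using saturation_eq_carrier[OF K] saturation_carrier[OF Pp] by simp
  then show ?thesis using K_dcc unfolding loc_dcc_def by simp
qed

text \<open>Nakayama's lemma for the localization at \<open>P\<close>: if \<open>M\<^sub>P = W\<^sub>P + I M\<^sub>P\<close> with \<open>I \<subseteq> P\<close>,
  then \<open>M\<^sub>P = W\<^sub>P\<close>.\<close>

lemma saturation_nakayama:
  assumes P: "primeideal P R" and I: "ideal I R" "I \<subseteq> P" and W: "ideal W R" and M: "ideal M R"
    and M_sat: "M \<subseteq> saturation P (W <+>\<^bsub>R\<^esub> (I \<cdot> M))"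
  shows "M \<subseteq> saturation P W"
proof -
  obtain A where A: "A \<subseteq> carrier R" "finite A" and M_eq: "M = Idl A"
    using finetely_gen[OF M] by blast
  have "Idl A \<subseteq> saturation P W"
    if "ideal W R" "Idl A \<subseteq> saturation P (W <+>\<^bsub>R\<^esub> (I \<cdot> (Idl A)))" for W
    using A(2,1) that
  proof (induction A arbitrary: W rule: finite_induct)
    case empty
    then show ?case using genideal_minimal[OF saturation_ideal[OF P empty.prems(2)]] by blast
  next
    case (insert m A W)
    let ?M0 = "Idl A" and ?N = "PIdl m"
    have m: "m \<in> carrier R" and A_carr: "A \<subseteq> carrier R" using insert.prems(1) by auto
    have ideals: "ideal ?M0 R" "ideal ?N R" "ideal (W <+>\<^bsub>R\<^esub> ?N) R"
      using genideal_ideal[OF A_carr] cgenideal_ideal[OF m] add_ideals[OF insert.prems(2)] by blast+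
    have M_sat: "?M0 <+>\<^bsub>R\<^esub> ?N \<subseteq> saturation P (W <+>\<^bsub>R\<^esub> (I \<cdot> ?M0 <+>\<^bsub>R\<^esub> I \<cdot> ?N))"
      using insert.prems(3)
      unfolding Idl_insert[OF A_carr m] ideal_prod_r_distr[OF I(1) ideals(1,2)] .
    then have "?M0 \<subseteq> saturation P ((W <+>\<^bsub>R\<^esub> ?N) <+>\<^bsub>R\<^esub> I \<cdot> ?M0)"
      using ideal_sum_upper1[OF ideals(1,2)]
        saturation_mono[OF set_add_ideal_prod_subset[OF I(1) insert.prems(2) ideals(1,2)]] by blast
    then have M0_sat: "?M0 \<subseteq> saturation P (W <+>\<^bsub>R\<^esub> ?N)"
      by (rule insert.IH[OF A_carr ideals(3)])
    have "?N \<subseteq> saturation P (W <+>\<^bsub>R\<^esub> (I \<cdot> ?N))"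
      using M_sat ideal_sum_upper2[OF ideals(1,2)]
        saturation_subset_saturation[OF P
          set_add_ideal_prod_subset_saturation[OF P I(1) insert.prems(2) ideals(2) M0_sat]]
      by blast
    then have N_sat: "?N \<subseteq> saturation P W"
      using saturation_principal_cancel[OF P I insert.prems(2) m] cgenideal_self[OF m]
        cgenideal_minimal[OF saturation_ideal[OF P insert.prems(2)]] by blast
    then have "W <+>\<^bsub>R\<^esub> ?N \<subseteq> saturation P W"
      using subset_saturation[OF P ideal_subset_carrier[OF insert.prems(2)]]
      by (intro set_add_subset_saturation[OF P insert.prems(2)])
    then have "?M0 \<subseteq> saturation P W"
      using M0_sat saturation_subset_saturation[OF P] by blast
    then show ?case
      unfolding Idl_insert[OF A_carr m]
      using N_sat by (rule set_add_subset_saturation[OF P insert.prems(2)])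
  qed
  then show ?thesis using W M_sat unfolding M_eq by blast
qed

lemma saturation_pow_plus_not_stable:
  assumes w: "primeideal w R" and p: "primeideal p R" and "w \<subset> p"
  shows "\<not> saturation p (pow_plus w p n) \<subseteq> saturation p (pow_plus w p (Suc n))"
proof
  have w_id: "ideal w R" and p_id: "ideal p R" using w p primeideal.axioms(1) by blast+
  have pow_plus: "ideal (pow_plus w p n) R" using pow_plus_ideal[OF w_id p_id] .
  assume "saturation p (pow_plus w p n) \<subseteq> saturation p (pow_plus w p (Suc n))"
  then have "pow_plus w p n \<subseteq> saturation p (w <+>\<^bsub>R\<^esub> (p \<cdot> (pow_plus w p n)))"
    using subset_saturation[OF p ideal_subset_carrier[OF pow_plus]] by simp
  then have "pow_plus w p n \<subseteq> w"
    using saturation_nakayama[OF p p_id order_refl w_id pow_plus]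
      saturation_primeideal[OF w _ p] assms(3)
    by blast
  moreover obtain a where a: "a \<in> p" "a \<notin> w" using assms(3) by blast
  ultimately show False
    using pow_mem_pow_plus[OF w_id a(1) ideal.Icarr[OF p_id a(1)], of n]
      primeideal_pow_mem[OF w ideal.Icarr[OF p_id a(1)]] by blast
qed

text \<open>The localization at \<open>u\<close> of \<open>R/(w + (x))\<close> is Artinian, so the saturated powers of \<open>p\<close>
  become stationary modulo \<open>x\<close>; Nakayama's lemma removes \<open>x\<close>, since \<open>x\<close> acts injectively on
  ideals saturated at \<open>p\<close>.\<close>

lemma saturation_pow_plus_stable:
  assumes w: "primeideal w R" and p: "primeideal p R" and u: "primeideal u R"
    and pu: "p \<subseteq> u" and x: "x \<in> carrier R - p"
    and u_min: "u \<in> minimal_primes (w <+>\<^bsub>R\<^esub> PIdl x)"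
  shows "\<exists>n. saturation p (pow_plus w p n) \<subseteq> saturation p (pow_plus w p (Suc n))"
proof -
  have w_id: "ideal w R" and p_id: "ideal p R" using w p primeideal.axioms(1) by blast+
  have x_id: "ideal (PIdl x) R" using cgenideal_ideal x by blast
  have J: "ideal (w <+>\<^bsub>R\<^esub> PIdl x) R" using add_ideals[OF w_id x_id] .
  have x_u: "PIdl x \<subseteq> u"
    using u_min ideal_sum_upper2[OF w_id x_id] unfolding minimal_primes_def by blast
  define sym where "sym n = saturation p (pow_plus w p n)" for n
  have sym: "ideal (sym n) R" for n
    unfolding sym_def using saturation_ideal[OF p pow_plus_ideal[OF w_id p_id]] .
  have sym_Suc: "sym (Suc n) \<subseteq> sym n" for n
    unfolding sym_def using saturation_mono[OF pow_plus_Suc_subset[OF w_id p_id]] .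
  have w_sym: "w \<subseteq> sym n" for n
    using subset_pow_plus[OF w_id p_id]
      subset_saturation[OF p ideal_subset_carrier[OF pow_plus_ideal[OF w_id p_id]]]
    unfolding sym_def by blast
  define I where "I n = sym n <+>\<^bsub>R\<^esub> PIdl x" for n
  have "\<exists>n. \<forall>m\<ge>n. I n \<subseteq> saturation u (I m)"
  proof (rule loc_dccD[OF loc_dcc_carrier[OF u_min J]])
    show "ideal (I n) R" for n unfolding I_def using add_ideals[OF sym x_id] .
    show "w <+>\<^bsub>R\<^esub> PIdl x \<subseteq> I n" for n unfolding I_def using set_add_mono[OF w_sym order_refl] .
    show "I n \<subseteq> saturation u (carrier R)" for n
      unfolding saturation_carrier[OF u] I_def
      by (rule ideal_subset_carrier[OF add_ideals[OF sym x_id]])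
    show "I (Suc n) \<subseteq> I n" for n unfolding I_def using set_add_mono[OF sym_Suc order_refl] .
  qed
  then obtain n where "\<forall>m\<ge>n. I n \<subseteq> saturation u (I m)" by blast
  then have "sym n \<subseteq> saturation u (sym (Suc n) <+>\<^bsub>R\<^esub> PIdl x)"
    unfolding I_def using ideal_sum_upper1[OF sym x_id] by (meson le_SucI order.refl subset_trans)
  then have "sym n \<subseteq> saturation u (sym (Suc n) <+>\<^bsub>R\<^esub> (sym n \<inter> PIdl x))"
    by (rule saturation_modular[OF u sym sym x_id sym_Suc])
  also have "\<dots> \<subseteq> saturation u (sym (Suc n) <+>\<^bsub>R\<^esub> ((PIdl x) \<cdot> (sym n)))"
    using PIdl_inter_saturation[OF p x pow_plus_ideal[OF w_id p_id], of n]
    unfolding sym_def by (intro saturation_mono set_add_mono[OF order_refl]) blast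
  finally have "sym n \<subseteq> saturation u (sym (Suc n))"
    by (rule saturation_nakayama[OF u x_id x_u sym sym])
  also have "\<dots> \<subseteq> sym (Suc n)"
    using saturation_antimono[OF pu] saturation_idem[OF p] unfolding sym_def by blast
  finally show ?thesis unfolding sym_def by blast
qed

theorem principal_ideal_theorem:
  assumes w: "primeideal w R" and p: "primeideal p R" and u: "primeideal u R"
    and wp: "w \<subseteq> p" and pu: "p \<subseteq> u" and x: "x \<in> carrier R"
    and u_min: "u \<in> minimal_primes (w <+>\<^bsub>R\<^esub> PIdl x)"
  shows "p = w \<or> p = u"
proof (rule ccontr)
  assume "\<not> (p = w \<or> p = u)"
  then have pw: "w \<subset> p" and pu': "p \<noteq> u" using wp by auto
  have x_notin_p: "x \<notin> p"
  proof
    assume "x \<in> p"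
    have p_id: "ideal p R" using primeideal.axioms(1)[OF p] .
    have "w <+>\<^bsub>R\<^esub> PIdl x \<subseteq> p"
      using ideal_sum_least[OF p_id wp cgenideal_minimal[OF p_id \<open>x \<in> p\<close>]] .
    then show False using u_min p pu pu' unfolding minimal_primes_def by blast
  qed
  then show False
    using saturation_pow_plus_stable[OF w p u pu _ u_min]
      saturation_pow_plus_not_stable[OF w p pw] x
    by blast
qed

corollary exists_prime_below_containing:
  assumes w: "primeideal w R" and p: "primeideal p R" and u: "primeideal u R"
    and "w \<subset> p" "p \<subset> u" and x: "x \<in> u"
  shows "\<exists>Q. primeideal Q R \<and> w \<subseteq> Q \<and> x \<in> Q \<and> Q \<subset> u"
proof (rule ccontr)
  assume none: "\<not> ?thesis"
  have x_carr: "x \<in> carrier R" using ideal.Icarr[OF primeideal.axioms(1)[OF u] x] .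
  have x_id: "ideal (PIdl x) R" and w_id: "ideal w R" and u_id: "ideal u R"
    using cgenideal_ideal[OF x_carr] primeideal.axioms(1) w u by blast+
  have "u \<in> minimal_primes (w <+>\<^bsub>R\<^esub> PIdl x)"
    unfolding minimal_primes_def
  proof (intro CollectI conjI allI impI)
    show "w <+>\<^bsub>R\<^esub> PIdl x \<subseteq> u"
      using ideal_sum_least[OF u_id _ cgenideal_minimal[OF u_id x]] assms(4,5) by blast
    fix Q assume Q: "primeideal Q R \<and> w <+>\<^bsub>R\<^esub> PIdl x \<subseteq> Q \<and> Q \<subseteq> u"
    then have "w \<subseteq> Q" "x \<in> Q"
      using ideal_sum_upper1[OF w_id x_id] ideal_sum_upper2[OF w_id x_id] cgenideal_self[OF x_carr]
      by blast+
    then show "Q = u" using none Q by blast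
  qed (rule u)
  then have "p = w \<or> p = u"
    using principal_ideal_theorem[OF w p u _ _ x_carr] assms(4,5) by blast
  then show False using assms(4,5) by blast
qed

lemma finite_minimal_primes:
  assumes "ideal I R" shows "finite (minimal_primes I)"
proof (rule ccontr)
  assume "infinite (minimal_primes I)"
  then have "{J. ideal J R \<and> infinite (minimal_primes J)} \<noteq> {}" using assms by blast
  then obtain I0 where I0: "ideal I0 R" "infinite (minimal_primes I0)"
    and I0_max: "\<And>J. ideal J R \<Longrightarrow> infinite (minimal_primes J) \<Longrightarrow> I0 \<subseteq> J \<Longrightarrow> J = I0"
    using exists_maximal_ideal[of "{J. ideal J R \<and> infinite (minimal_primes J)}"] by blast
  show False
  proof (cases "primeideal I0 R \<or> I0 = carrier R")
    case True
    have "minimal_primes I0 \<subseteq> {I0}"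
    proof
      fix P assume P: "P \<in> minimal_primes I0"
      then have "I0 \<subseteq> P" "P \<subseteq> carrier R"
        using ideal_subset_carrier[OF primeideal.axioms(1)] unfolding minimal_primes_def by blast+
      then show "P \<in> {I0}" using True P unfolding minimal_primes_def by blast
    qed
    then show False using I0(2) finite_subset by blast
  next
    case False
    then obtain a b where ab: "a \<in> carrier R" "b \<in> carrier R" "a \<notin> I0" "b \<notin> I0" "a \<otimes> b \<in> I0"
      using not_primeideal_witness[OF I0(1)] by blast
    have finite_ext: "finite (minimal_primes (I0 <+>\<^bsub>R\<^esub> PIdl c))" if "c \<in> carrier R" "c \<notin> I0" for c
    proof (rule ccontr)
      assume "infinite (minimal_primes (I0 <+>\<^bsub>R\<^esub> PIdl c))"
      moreover have "ideal (I0 <+>\<^bsub>R\<^esub> PIdl c) R"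
        using add_ideals[OF I0(1) cgenideal_ideal[OF that(1)]] .
      moreover have "I0 \<subseteq> I0 <+>\<^bsub>R\<^esub> PIdl c"
        using ideal_sum_upper1[OF I0(1) cgenideal_ideal[OF that(1)]] .
      ultimately have "I0 <+>\<^bsub>R\<^esub> PIdl c = I0" using I0_max by blast
      then show False
        using that ideal_sum_upper2[OF I0(1) cgenideal_ideal[OF that(1)]]
          cgenideal_self[OF that(1)] by blast
    qed
    then show False
      using minimal_primes_subset_Un[OF I0(1) ab(1,2,5)] finite_ext ab I0(2) finite_subset by blast
  qed
qed

lemma finite_mub_Spec:
  assumes "primeideal u R" "primeideal v R"
  shows "finite (mub (Spec R) (\<subseteq>) {u, v})"
  using finite_subset[OF mub_Spec_subset[OF assms] finite_minimal_primes]
    add_ideals[OF primeideal.axioms(1)[OF assms(1)] primeideal.axioms(1)[OF assms(2)]] .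

lemma finite_minset_Spec: "finite (minset (Spec R) (\<subseteq>))"
proof -
  have "minset (Spec R) (\<subseteq>) \<subseteq> minimal_primes {\<zero>}"
  proof
    fix P assume P: "P \<in> minset (Spec R) (\<subseteq>)"
    then have "primeideal P R" unfolding minset_def mem_Spec by blast
    then have "\<zero> \<in> P" by (rule ideal_zero_closed[OF primeideal.axioms(1)])
    with P show "P \<in> minimal_primes {\<zero>}"
      unfolding minset_def minimal_primes_def Spec_def by simp
  qed
  then show ?thesis by (rule finite_subset[OF _ finite_minimal_primes[OF zeroideal]])
qed

lemma finite_UN_mub_Spec:
  assumes "w \<in> Spec R"
  shows "finite (\<Union>T\<in>minset (Spec R) (\<subseteq>) - {w}. mub (Spec R) (\<subseteq>) {w, T})"
  using finite_minset_Spec finite_mub_Spec assms unfolding minset_def mem_Spec by auto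

lemma exists_mem_avoiding_Spec:
  assumes u: "u \<in> Spec R" and F: "finite F" "F \<subseteq> Spec R" "u \<notin> F"
    and u_max: "\<And>T. T \<in> Spec R \<Longrightarrow> u \<subseteq> T \<Longrightarrow> T = u"
  shows "\<exists>x\<in>u. \<forall>Q\<in>F. x \<notin> Q"
proof (rule prime_avoidance[OF primeideal.axioms(1) F(1)])
  show "primeideal u R" using u mem_Spec by blast
  show "\<forall>Q\<in>F. primeideal Q R \<and> \<not> u \<subseteq> Q"
  proof
    fix Q assume "Q \<in> F"
    then have "Q \<in> Spec R" "Q \<noteq> u" using F by blast+
    then show "primeideal Q R \<and> \<not> u \<subseteq> Q" using u_max[of Q] mem_Spec by blast
  qed
qed

lemma infinite_between_Spec:
  assumes dim: "pdim (Spec R) (\<subseteq>) \<le> 2" and H2: "finite (Hlevel (Spec R) (\<subseteq>) 2)"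
    and U: "w \<in> Spec R" "v \<in> Spec R" "u \<in> Spec R" and wv: "w \<subset> v" and vu: "v \<subset> u"
  shows "infinite (between (Spec R) (\<subseteq>) u w)"
proof
  let ?U = "Spec R"
  let ?B = "between ?U (\<subseteq>) u w"
  assume B: "finite ?B"
  define Ms where "Ms = (\<Union>T\<in>minset ?U (\<subseteq>) - {w}. mub ?U (\<subseteq>) {w, T})"
  define F where "F = insert w (?B \<union> Hlevel ?U (\<subseteq>) 2 \<union> Ms) - {u}"
  have "finite F" unfolding F_def Ms_def using B H2 finite_UN_mub_Spec[OF U(1)] by blast
  have "w \<in> F" unfolding F_def using wv vu by blast
  have "?B \<subseteq> ?U" "Hlevel ?U (\<subseteq>) 2 \<subseteq> ?U" "Ms \<subseteq> ?U"
    unfolding between_def Hlevel_def Ms_def mub_def minset_def by blast+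
  then have "F \<subseteq> ?U" unfolding F_def using U(1) by blast
  moreover have "T = u" if "T \<in> ?U" "u \<subseteq> T" for T
    using pdim_le_2_no_chain4[OF dim U that(1)] wv vu that(2) by blast
  ultimately obtain x where x: "x \<in> u" "\<forall>Q\<in>F. x \<notin> Q"
    using exists_mem_avoiding_Spec[OF U(3) \<open>finite F\<close>] unfolding F_def by blast
  obtain Q where Q: "primeideal Q R" "w \<subseteq> Q" "x \<in> Q" "Q \<subset> u"
    using exists_prime_below_containing[OF _ _ _ wv vu x(1)] U unfolding mem_Spec by blast
  have "Q \<notin> F" using x(2) Q(3) by blast
  then have "w \<subset> Q" using \<open>w \<in> F\<close> Q(2) by blast
  have "Q \<notin> ?B" using \<open>Q \<notin> F\<close> Q(4) unfolding F_def by blast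
  then consider (above) T where "T \<in> Hlevel ?U (\<subseteq>) 2" "T \<noteq> u" "Q \<subseteq> T"
    | (mub) T where "T \<in> minset ?U (\<subseteq>)" "T \<noteq> w" "Q \<in> mub ?U (\<subseteq>) {w, T}"
    using not_between_cases[OF dim U(1) _ U(3) \<open>w \<subset> Q\<close> Q(4)] Q(1) unfolding mem_Spec by blast
  then show False
  proof cases
    case above
    then show False using x Q(3) unfolding F_def by blast
  next
    case mub
    then have "Q \<in> F" using Q(4) unfolding F_def Ms_def by blast
    then show False using \<open>Q \<notin> F\<close> by blast
  qed
qed

end

theorem theorem4p2:
  fixes R :: "('a, 'b) ring_scheme"
  assumes "cring R"
    and "noetherian_ring R"
    and "krull_dim R = 2"
    and "finite {P \<in> Spec R. pheight (Spec R) (\<subseteq>) P = 2}"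
  shows "K_poset (Spec R) (\<subseteq>)"
proof -
  interpret noetherian_cring R using assms(1,2) by (simp add: noetherian_cring_def)
  have dim: "pdim (Spec R) (\<subseteq>) \<le> 2" using assms(3) unfolding krull_dim_def by simp
  have H2: "finite (Hlevel (Spec R) (\<subseteq>) 2)"
    using assms(4) unfolding Hlevel_def by (simp add: numeral_eq_enat)
  have mub: "finite (mub (Spec R) (\<subseteq>) {u, v})"
    if "u \<in> minset (Spec R) (\<subseteq>)" "v \<in> minset (Spec R) (\<subseteq>)" for u v
    using that finite_mub_Spec by (simp add: minset_def mem_Spec)
  have between: "infinite (between (Spec R) (\<subseteq>) u w)"
    if "u \<in> Spec R" "w \<in> Spec R" "\<exists>v\<in>Spec R. v \<subseteq> u \<and> v \<noteq> u \<and> w \<subseteq> v \<and> w \<noteq> v" for u w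
    using that infinite_between_Spec[OF dim H2] by blast
  show ?thesis unfolding K_poset_def using dim finite_minset_Spec H2 mub between by blast
qed

end
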